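(* Let $N \ge 1$ and let $W_N$ be the set of binary words of length $N$. Define $\varphi_6 : W_N \to W_N$ by $\varphi_6(u) = v\, 01011\, 0^p v'$ if $u = v 0^p 10110 v'$ where $p \geq 2$, $v'$ is a (possibly empty) word, and $v$ is a (possibly empty) word which is either empty or ends with the letter $1$ and such that $v 0^p$ does not contain $0010110$ as a contiguous subword; and $\varphi_6(u) = u$ otherwise. Then $|P(\varphi_6(u))| \leq |P(u)|$ for every $u \in W_N$.
   Context: For a binary word $x$, $x^j$ denotes $j$ concatenated copies of $x$, and juxtaposition denotes concatenation. For a binary word $w = w_1 \cdots w_\ell$ of length $\ell$, $P(w)$ is the set of indices $i \geq 2$ such that at least one of the following holds: (i) $\ell \geq i$ and $w_{i-1} w_i = 00$; (ii) $\ell \geq i+2$ and $w_{i-1} w_i w_{i+1} w_{i+2} = 0100$; (iii) $\ell \geq i+3$ and $w_{i-1} \cdots w_{i+3} = 01010$. *)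

theory Defs
  imports Main "HOL-Library.Sublist"
begin

text \<open>Binary words are lists of naturals over the alphabet {0,1}; positions are 1-based
  in the paper, so the letter w_j is  w ! (j - 1).\<close>

definition W :: "nat \<Rightarrow> nat list set" where
  "W N = {w. length w = N \<and> set w \<subseteq> {0, 1}}"

definition P :: "nat list \<Rightarrow> nat set" where
  "P w = {i. 2 \<le> i \<and>
      ((length w \<ge> i \<and> w ! (i - 2) = 0 \<and> w ! (i - 1) = 0)
     \<or> (length w \<ge> i + 2 \<and> take 4 (drop (i - 2) w) = [0, 1, 0, 0])
     \<or> (length w \<ge> i + 3 \<and> take 5 (drop (i - 2) w) = [0, 1, 0, 1, 0]))}"

definition phi6_dec :: "nat list \<Rightarrow> nat list \<Rightarrow> nat \<Rightarrow> nat list \<Rightarrow> bool" where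
  "phi6_dec u v p v' \<longleftrightarrow>
     u = v @ replicate p 0 @ [1, 0, 1, 1, 0] @ v' \<and> p \<ge> 2 \<and>
     (v = [] \<or> last v = 1) \<and>
     \<not> sublist [0, 0, 1, 0, 1, 1, 0] (v @ replicate p 0)"

definition phi6 :: "nat list \<Rightarrow> nat list" where
  "phi6 u = (if \<exists>v p v'. phi6_dec u v p v'
     then (let (v, p, v') = (SOME (v, p, v'). phi6_dec u v p v')
           in v @ [0, 1, 0, 1, 1] @ replicate p 0 @ v')
     else u)"

end

theory Submission
  imports Defs
begin

text \<open>An index j + 2 lies in P w exactly when one of the patterns 00, 0100, 01010 begins at
  the 0-based position j of w, so card (P w) counts the suffixes of w that begin with a pattern.
  Since v is empty or ends in 1, moving the block 0^p 10110 to 01011 0^p does not change which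
  suffixes starting inside v begin with a pattern, and inside the block both sides contribute
  p - 1 occurrences (from the run of zeros) besides those of 0 v'. Hence phi6 even preserves
  card P.\<close>

definition pattern_prefix :: "nat list \<Rightarrow> bool" where
  "pattern_prefix w \<longleftrightarrow> take 2 w = [0, 0] \<or> take 4 w = [0, 1, 0, 0] \<or> take 5 w = [0, 1, 0, 1, 0]"

lemma take_drop_length_le:
  "take k (drop j w) = xs \<Longrightarrow> length xs = k \<Longrightarrow> xs \<noteq> [] \<Longrightarrow> j + k \<le> length w"
  by (auto simp: min_def split: if_splits)

lemma take_2_drop_eq_iff:
  "take 2 (drop j w) = [a, b] \<longleftrightarrow> j + 2 \<le> length w \<and> w ! j = a \<and> w ! Suc j = b"
proof (cases "j + 2 \<le> length w")
  case True
  then have "drop j w = w ! j # w ! Suc j # drop (j + 2) w" by (simp add: Cons_nth_drop_Suc)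
  then show ?thesis using True by simp
next
  case False
  then show ?thesis using take_drop_length_le[of 2 j w "[a, b]"] by auto
qed

lemma Suc_Suc_mem_P_iff:
  "j + 2 \<in> P w \<longleftrightarrow> j < length w \<and> pattern_prefix (drop j w)"
  unfolding P_def pattern_prefix_def take_2_drop_eq_iff
  by (auto dest: take_drop_length_le)

lemma P_eq_image: "P w = (\<lambda>j. j + 2) ` {j. j < length w \<and> pattern_prefix (drop j w)}"
proof (rule set_eqI)
  fix i
  show "i \<in> P w \<longleftrightarrow> i \<in> (\<lambda>j. j + 2) ` {j. j < length w \<and> pattern_prefix (drop j w)}"
  proof (cases "2 \<le> i")
    case True
    then obtain j where "i = j + 2" by (metis le_add_diff_inverse2)
    then show ?thesis by (auto simp: Suc_Suc_mem_P_iff[symmetric])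
  next
    case False
    then show ?thesis by (auto simp: P_def)
  qed
qed

fun pattern_count :: "nat list \<Rightarrow> nat" where
  "pattern_count [] = 0"
| "pattern_count (x # xs) = (if pattern_prefix (x # xs) then 1 else 0) + pattern_count xs"

lemma pattern_count_eq_card:
  "pattern_count w = card {j. j < length w \<and> pattern_prefix (drop j w)}"
proof (induction w)
  case Nil
  then show ?case by simp
next
  case (Cons x xs)
  have "{j. j < length (x # xs) \<and> pattern_prefix (drop j (x # xs))} =
      (if pattern_prefix (x # xs) then {0} else {}) \<union>
      Suc ` {j. j < length xs \<and> pattern_prefix (drop j xs)}"
    by (auto simp: image_iff less_Suc_eq_0_disj)
  then show ?case using Cons.IH by (simp add: card_image card_insert_if)
qed

lemma card_P_eq_pattern_count: "card (P w) = pattern_count w"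
  unfolding P_eq_image pattern_count_eq_card by (rule card_image) (simp add: inj_on_def)

lemma pattern_count_append_cong:
  assumes "\<And>j. j < length v \<Longrightarrow> pattern_prefix (drop j v @ w) = pattern_prefix (drop j v @ w')"
    and "pattern_count w = pattern_count w'"
  shows "pattern_count (v @ w) = pattern_count (v @ w')"
  using assms
proof (induction v)
  case Nil
  then show ?case by simp
next
  case (Cons x v)
  have "pattern_count (v @ w) = pattern_count (v @ w')"
    using Cons.IH Cons.prems(1)[of "Suc _"] Cons.prems(2) by simp
  then show ?case using Cons.prems(1)[of 0] by simp
qed

lemma pattern_count_replicate_zero:
  "pattern_count (replicate n 0 @ 0 # w) = n + pattern_count (0 # w)"
proof (induction n)
  case 0
  then show ?case by simp
next
  case (Suc n)
  have "replicate (Suc n) 0 @ 0 # w = 0 # 0 # replicate n 0 @ w"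
    by (simp add: replicate_app_Cons_same)
  moreover have "pattern_prefix (0 # 0 # x)" for x by (simp add: pattern_prefix_def)
  ultimately show ?case using Suc.IH by (simp add: replicate_app_Cons_same)
qed

lemma pattern_count_swap_block:
  assumes "p \<ge> 2"
  shows "pattern_count (replicate p 0 @ [1, 0, 1, 1, 0] @ w) =
    pattern_count ([0, 1, 0, 1, 1] @ replicate p 0 @ w)"
proof -
  obtain q where q: "p = Suc (Suc q)" using assms by (metis add_2_eq_Suc le_Suc_ex)
  have zeros: "replicate p 0 @ x = replicate (Suc q) 0 @ 0 # x" for x :: "nat list"
    by (simp add: q replicate_app_Cons_same)
  have "pattern_count (replicate p 0 @ [1, 0, 1, 1, 0] @ w) = Suc q + pattern_count (0 # w)"
    unfolding zeros pattern_count_replicate_zero by (simp add: pattern_prefix_def)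
  also have "\<dots> = pattern_count (replicate p 0 @ w)"
    unfolding zeros pattern_count_replicate_zero ..
  also have "\<dots> = pattern_count ([0, 1, 0, 1, 1] @ replicate p 0 @ w)"
    by (simp add: pattern_prefix_def q)
  finally show ?thesis .
qed

lemma pattern_prefix_swap_block:
  assumes "s \<noteq> []" "last s = 1" "p \<ge> 2"
  shows "pattern_prefix (s @ replicate p 0 @ [1, 0, 1, 1, 0] @ w) =
    pattern_prefix (s @ [0, 1, 0, 1, 1] @ replicate p 0 @ w)"
proof -
  \<comment> \<open>A pattern starting in s and running past its final 1 forces s = 01 or s = 0101,
    and both continuations then complete a pattern.\<close>
  obtain q where q: "p = Suc (Suc q)" using assms(3) by (metis add_2_eq_Suc le_Suc_ex)
  obtain t where t: "s = t @ [1]" using assms by (metis append_butlast_last_id)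
  show ?thesis
  proof (cases "length s \<ge> 5")
    case True
    then show ?thesis by (simp add: pattern_prefix_def take_append)
  next
    case False
    then have "length t < 4" by (simp add: t)
    then have "length t = 0 \<or> length t = 1 \<or> length t = 2 \<or> length t = 3" by linarith
    then show ?thesis unfolding t q by (auto simp: pattern_prefix_def length_Suc_conv)
  qed
qed

lemma card_P_phi6_dec:
  assumes "phi6_dec u v p v'"
  shows "card (P (v @ [0, 1, 0, 1, 1] @ replicate p 0 @ v')) = card (P u)"
proof -
  from assms have u: "u = v @ replicate p 0 @ [1, 0, 1, 1, 0] @ v'" and p: "p \<ge> 2"
    and last_v: "v = [] \<or> last v = 1"
    unfolding phi6_dec_def by auto
  have "pattern_prefix (drop j v @ replicate p 0 @ [1, 0, 1, 1, 0] @ v') =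
      pattern_prefix (drop j v @ [0, 1, 0, 1, 1] @ replicate p 0 @ v')" if "j < length v" for j
    using that last_v by (intro pattern_prefix_swap_block p) (auto simp: last_drop)
  then have "pattern_count u = pattern_count (v @ [0, 1, 0, 1, 1] @ replicate p 0 @ v')"
    unfolding u by (intro pattern_count_append_cong pattern_count_swap_block p)
  then show ?thesis by (simp add: card_P_eq_pattern_count)
qed

lemma phi6_cases:
  obtains "phi6 u = u"
  | v p v' where "phi6_dec u v p v'" "phi6 u = v @ [0, 1, 0, 1, 1] @ replicate p 0 @ v'"
proof (cases "\<exists>v p v'. phi6_dec u v p v'")
  case True
  then have "\<exists>x. (\<lambda>(v, p, v'). phi6_dec u v p v') x" by auto
  then have "(\<lambda>(v, p, v'). phi6_dec u v p v') (SOME (v, p, v'). phi6_dec u v p v')"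
    by (rule someI_ex)
  then show ?thesis using that(2) True unfolding phi6_def by (auto split: prod.splits)
next
  case False
  then have "phi6 u = u" unfolding phi6_def by auto
  then show ?thesis by (rule that(1))
qed

theorem lemma4p6:
  fixes N :: nat and u :: "nat list"
  assumes "N \<ge> 1" and "u \<in> W N"
  shows "card (P (phi6 u)) \<le> card (P u)"
proof (cases u rule: phi6_cases)
  case 1
  then show ?thesis by simp
next
  case (2 v p v')
  then show ?thesis using card_P_phi6_dec[of u v p v'] by simp
qed

end
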